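(* Let $(M,g,h)$ be a $4$-dimensional smooth metric measure spacetime which is a solution of the vacuum weighted Einstein field equations $h\rho-\operatorname{Hes}_h+\Delta h\, g=0$, such that $(M,g)$ is non-flat and is a $pr$-wave with metric $g=2\,du\,dv+F(u,v,x,y)\,dv^2+dx^2+dy^2$ in local coordinates $(u,v,x,y)$. Then the Ricci operator is nilpotent, and the density function $h$ takes the form \[ h(v,x,y)=h_x(v)x+h_y(v)y+h_0(v), \] while $F$ is given by \[ F(u,v,x,y)=F_1(v,x,y)u+F_0(v,x,y), \] for suitable smooth functions $h_x,h_y,h_0,F_1,F_0$.
   Context: A smooth metric measure spacetime is a triple $(M,g,h)$ (shorthand for $(M,g,h\,dvol_g)$) where $(M,g)$ is a Lorentzian manifold and $h$ is a positive smooth function on $M$, assumed non-constant on any open subset (so $\nabla h\neq0$). The weighted Einstein tensor is $G^h=h\rho-\operatorname{Hes}_h+\Delta h\, g$, where $\rho$ is the Ricci tensor, $\operatorname{Hes}_h$ the Hessian and $\Delta h$ the Laplacian of $h$; $(M,g,h)$ is a solution of the vacuum weighted Einstein field equations if $G^h=0$ on $M$. The Ricci operator $\operatorname{Ric}$ is the $(1,1)$-tensor with $g(\operatorname{Ric}X,Y)=\rho(X,Y)$. A $pr$-wave is a Lorentzian manifold admitting a recurrent lightlike vector field $V$ (i.e. $\nabla_XV=\omega(X)V$ for some $1$-form $\omega$) such that $R(V^\perp,V^\perp,\cdot,\cdot)=0$; in dimension $4$ it admits local coordinates $(u,v,x,y)$ with $g=2\,du\,dv+F(u,v,x,y)\,dv^2+dx^2+dy^2$.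 *)

theory Defs
  imports "HOL-Analysis.Analysis"
begin

text \<open>Points of the coordinate chart: (u, v, x, y).\<close>
type_synonym pt = "real \<times> real \<times> real \<times> real"

definition dd :: "'a::real_normed_vector \<Rightarrow> ('a \<Rightarrow> real) \<Rightarrow> 'a \<Rightarrow> real" where
  "dd b f p = deriv (\<lambda>t. f (p + t *\<^sub>R b)) 0"

definition smooth_on :: "'a::euclidean_space set \<Rightarrow> ('a \<Rightarrow> real) \<Rightarrow> bool" where
  "smooth_on S f \<longleftrightarrow> (\<forall>bs. set bs \<subseteq> Basis \<longrightarrow> (foldr dd bs f) differentiable_on S)"

text \<open>Coordinate vector fields: index 0 = u, 1 = v, 2 = x, 3 = y.\<close>
definition ecoord :: "nat \<Rightarrow> pt" where
  "ecoord i = (if i = 0 then (1,0,0,0) else if i = 1 then (0,1,0,0)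
               else if i = 2 then (0,0,1,0) else (0,0,0,1))"

definition pd :: "nat \<Rightarrow> (pt \<Rightarrow> real) \<Rightarrow> pt \<Rightarrow> real" where
  "pd i f = dd (ecoord i) f"

text \<open>Metric g = 2 du dv + F dv^2 + dx^2 + dy^2 and its inverse.\<close>
definition gpr :: "(pt \<Rightarrow> real) \<Rightarrow> nat \<Rightarrow> nat \<Rightarrow> pt \<Rightarrow> real" where
  "gpr F i j p = (if {i,j} = {0,1} then 1 else if i = 1 \<and> j = 1 then F p
                  else if i = j \<and> (i = 2 \<or> i = 3) then 1 else 0)"

definition gpr_inv :: "(pt \<Rightarrow> real) \<Rightarrow> nat \<Rightarrow> nat \<Rightarrow> pt \<Rightarrow> real" where
  "gpr_inv F i j p = (if {i,j} = {0,1} then 1 else if i = 0 \<and> j = 0 then - F p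
                  else if i = j \<and> (i = 2 \<or> i = 3) then 1 else 0)"

lemma gpr_inv_is_inverse:
  assumes "i < 4" "j < 4"
  shows "(\<Sum>k<4. gpr F i k p * gpr_inv F k j p) = (if i = j then 1 else 0)"
proof -
  have "i \<in> {0,1,2,3}" "j \<in> {0,1,2,3}" using assms by auto
  then show ?thesis unfolding gpr_def gpr_inv_def
    by (auto simp: lessThan_nat_numeral doubleton_eq_iff)
qed

definition christ :: "(nat \<Rightarrow> nat \<Rightarrow> pt \<Rightarrow> real) \<Rightarrow> (nat \<Rightarrow> nat \<Rightarrow> pt \<Rightarrow> real)
                      \<Rightarrow> nat \<Rightarrow> nat \<Rightarrow> nat \<Rightarrow> pt \<Rightarrow> real" where
  "christ g gi k i j p = (1/2) * (\<Sum>l<4. gi k l p *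
      (pd i (g j l) p + pd j (g i l) p - pd l (g i j) p))"

text \<open>Riemann curvature components R^l_{ijk}, R(d_i,d_j)d_k = R^l_{ijk} d_l.\<close>
definition riem :: "(nat \<Rightarrow> nat \<Rightarrow> pt \<Rightarrow> real) \<Rightarrow> (nat \<Rightarrow> nat \<Rightarrow> pt \<Rightarrow> real)
                    \<Rightarrow> nat \<Rightarrow> nat \<Rightarrow> nat \<Rightarrow> nat \<Rightarrow> pt \<Rightarrow> real" where
  "riem g gi l i j k p =
     pd i (christ g gi l j k) p - pd j (christ g gi l i k) p
     + (\<Sum>m<4. christ g gi l i m p * christ g gi m j k p
              - christ g gi l j m p * christ g gi m i k p)"

definition ricci :: "(nat \<Rightarrow> nat \<Rightarrow> pt \<Rightarrow> real) \<Rightarrow> (nat \<Rightarrow> nat \<Rightarrow> pt \<Rightarrow> real)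
                     \<Rightarrow> nat \<Rightarrow> nat \<Rightarrow> pt \<Rightarrow> real" where
  "ricci g gi j k p = (\<Sum>i<4. riem g gi i i j k p)"

definition ricop :: "(nat \<Rightarrow> nat \<Rightarrow> pt \<Rightarrow> real) \<Rightarrow> (nat \<Rightarrow> nat \<Rightarrow> pt \<Rightarrow> real)
                     \<Rightarrow> pt \<Rightarrow> nat \<Rightarrow> nat \<Rightarrow> real" where
  "ricop g gi p a b = (\<Sum>c<4. gi a c p * ricci g gi c b p)"

definition hess :: "(nat \<Rightarrow> nat \<Rightarrow> pt \<Rightarrow> real) \<Rightarrow> (nat \<Rightarrow> nat \<Rightarrow> pt \<Rightarrow> real)
                    \<Rightarrow> (pt \<Rightarrow> real) \<Rightarrow> nat \<Rightarrow> nat \<Rightarrow> pt \<Rightarrow> real" where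
  "hess g gi h i j p = pd i (pd j h) p - (\<Sum>k<4. christ g gi k i j p * pd k h p)"

definition lap :: "(nat \<Rightarrow> nat \<Rightarrow> pt \<Rightarrow> real) \<Rightarrow> (nat \<Rightarrow> nat \<Rightarrow> pt \<Rightarrow> real)
                   \<Rightarrow> (pt \<Rightarrow> real) \<Rightarrow> pt \<Rightarrow> real" where
  "lap g gi h p = (\<Sum>i<4. \<Sum>j<4. gi i j p * hess g gi h i j p)"

definition weinstein :: "(nat \<Rightarrow> nat \<Rightarrow> pt \<Rightarrow> real) \<Rightarrow> (nat \<Rightarrow> nat \<Rightarrow> pt \<Rightarrow> real)
                         \<Rightarrow> (pt \<Rightarrow> real) \<Rightarrow> nat \<Rightarrow> nat \<Rightarrow> pt \<Rightarrow> real" where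
  "weinstein g gi h i j p = h p * ricci g gi i j p - hess g gi h i j p + lap g gi h p * g i j p"

fun mpow4 :: "(nat \<Rightarrow> nat \<Rightarrow> real) \<Rightarrow> nat \<Rightarrow> nat \<Rightarrow> nat \<Rightarrow> real" where
  "mpow4 A 0 = (\<lambda>i j. if i = j then 1 else 0)"
| "mpow4 A (Suc n) = (\<lambda>i j. \<Sum>k<4. A i k * mpow4 A n k j)"

definition nilpotent4 :: "(nat \<Rightarrow> nat \<Rightarrow> real) \<Rightarrow> bool" where
  "nilpotent4 A \<longleftrightarrow> (\<exists>n. \<forall>i<4. \<forall>j<4. mpow4 A n i j = 0)"

end

theory Submission
  imports Defs
begin

(* In the chart the weighted Einstein equations read
     h_uu = h_ux = h_uy = h_xy = 0,  h_yy = h_xx,  2 h_uv = F_u h_u - h_xx,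
     h F_uu = -3 h_xx,  h F_ui = 2 h_iv - F_i h_u  (i = x, y).
   Differentiating them shows that on an open set where h_u does not vanish all second
   derivatives of F in u, x, y vanish, so the metric is flat there; non-flatness therefore
   forces h_u = 0.  Then F_uux = 0, and the x-derivative of h F_uu = -3 h_xx gives
   h_x F_uu = 0; on the open set where h_xx is nonzero F_uu is nonzero, so h_x and hence
   h_xx vanish there.  Thus h_xx = F_uu = 0, which makes Ric nilpotent, and integrating the
   vanishing derivatives along the fibres of the convex chart gives the affine forms of h
   and F. *)

section \<open>Directional derivatives\<close>

lemma has_real_derivative_along_line:
  assumes "(f has_derivative f') (at (q + x *\<^sub>R e))"
  shows "((\<lambda>y. f (q + y *\<^sub>R e)) has_real_derivative f' e) (at x)"
proof -
  have "((\<lambda>y. q + y *\<^sub>R e) has_derivative (\<lambda>y. y *\<^sub>R e)) (at x)"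
    by (auto intro!: derivative_eq_intros)
  from has_derivative_compose[OF this assms]
  have "((\<lambda>y. f (q + y *\<^sub>R e)) has_derivative (\<lambda>y. f' (y *\<^sub>R e))) (at x)" .
  moreover have "(\<lambda>y. f' (y *\<^sub>R e)) = (*) (f' e)"
    using linear_cmul[OF has_derivative_linear[OF assms]] by (auto simp: mult.commute)
  ultimately show ?thesis unfolding has_field_derivative_def by simp
qed

lemma dd_eq_frechet:
  assumes "(f has_derivative f') (at p)"
  shows "dd e f p = f' e"
  using has_real_derivative_along_line[of f f' p 0 e] assms
  unfolding dd_def by (simp add: DERIV_imp_deriv)

lemma has_real_derivative_along_line_dd:
  assumes "f differentiable (at (q + x *\<^sub>R e))"
  shows "((\<lambda>y. f (q + y *\<^sub>R e)) has_real_derivative dd e f (q + x *\<^sub>R e)) (at x)"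
proof -
  obtain f' where "(f has_derivative f') (at (q + x *\<^sub>R e))"
    using assms unfolding differentiable_def by blast
  then show ?thesis using has_real_derivative_along_line dd_eq_frechet by metis
qed

lemma has_real_derivative_dd:
  "f differentiable (at p) \<Longrightarrow> ((\<lambda>y. f (p + y *\<^sub>R e)) has_real_derivative dd e f p) (at 0)"
  using has_real_derivative_along_line_dd[of f p 0 e] by simp

lemma dd_add:
  assumes "f differentiable (at p)" "g differentiable (at p)"
  shows "dd e (\<lambda>q. f q + g q) p = dd e f p + dd e g p"
  unfolding dd_def[of e "\<lambda>q. f q + g q"]
  by (intro DERIV_imp_deriv DERIV_add has_real_derivative_dd assms)

lemma dd_diff:
  assumes "f differentiable (at p)" "g differentiable (at p)"
  shows "dd e (\<lambda>q. f q - g q) p = dd e f p - dd e g p"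
  unfolding dd_def[of e "\<lambda>q. f q - g q"]
  by (intro DERIV_imp_deriv DERIV_diff has_real_derivative_dd assms)

lemma dd_mult:
  assumes "f differentiable (at p)" "g differentiable (at p)"
  shows "dd e (\<lambda>q. f q * g q) p = dd e f p * g p + f p * dd e g p"
  using DERIV_mult[OF has_real_derivative_dd[OF assms(1)] has_real_derivative_dd[OF assms(2)], of e e]
  unfolding dd_def[of e "\<lambda>q. f q * g q"] by (simp add: DERIV_imp_deriv ac_simps)

lemma dd_cmult:
  assumes "f differentiable (at p)"
  shows "dd e (\<lambda>q. c * f q) p = c * dd e f p"
  unfolding dd_def[of e "\<lambda>q. c * f q"]
  by (intro DERIV_imp_deriv DERIV_cmult has_real_derivative_dd assms)

lemma dd_const: "dd e (\<lambda>q. c) p = 0"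
  unfolding dd_def by simp

lemma dd_cong_open:
  assumes "open S" "p \<in> S" "\<And>q. q \<in> S \<Longrightarrow> f q = g q"
  shows "dd e f p = dd e g p"
proof -
  have "continuous (at 0) (\<lambda>y::real. p + y *\<^sub>R e)" by (intro continuous_intros)
  then have "((\<lambda>y::real. p + y *\<^sub>R e) \<longlongrightarrow> p) (nhds 0)"
    by (simp add: continuous_at tendsto_nhds_iff)
  then have "\<forall>\<^sub>F y in nhds 0. p + y *\<^sub>R e \<in> S"
    using assms(1,2) by (simp add: tendsto_def)
  then have "\<forall>\<^sub>F y in nhds 0. f (p + y *\<^sub>R e) = g (p + y *\<^sub>R e)"
    by eventually_elim (use assms(3) in auto)
  then show ?thesis unfolding dd_def by (rule deriv_cong_ev) simp
qed

lemma foldr_dd_cong_open: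
  assumes "open S" "\<And>q. q \<in> S \<Longrightarrow> f q = g q" "q \<in> S"
  shows "foldr dd bs f q = foldr dd bs g q"
  using assms(3)
proof (induction bs arbitrary: q)
  case Nil then show ?case using assms(2) by simp
next
  case (Cons b bs) then show ?case
    using dd_cong_open[OF assms(1), of q "foldr dd bs f" "foldr dd bs g" b] by simp
qed

lemma dd_affine:
  assumes "linear L"
  shows "dd b (\<lambda>z. f (c + L z)) z = dd (L b) f (c + L z)"
proof -
  have "(\<lambda>t. f (c + L (z + t *\<^sub>R b))) = (\<lambda>t. f (c + L z + t *\<^sub>R L b))"
    using linear_add[OF assms] linear_cmul[OF assms] by (simp add: add.assoc)
  then show ?thesis unfolding dd_def by simp
qed

lemma foldr_dd_affine:
  assumes "linear L"
  shows "foldr dd bs (\<lambda>z. f (c + L z)) = (\<lambda>z. foldr dd (map L bs) f (c + L z))"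
proof (induction bs)
  case (Cons b bs)
  show ?case by (simp add: Cons dd_affine[OF assms] fun_eq_iff)
qed simp

lemma eq_if_dd_eq_0_convex:
  fixes f :: "'a::real_normed_vector \<Rightarrow> real"
  assumes "convex U" "\<And>x. x \<in> U \<Longrightarrow> f differentiable (at x)"
    and "p \<in> U" "q \<in> U" "\<And>x. x \<in> U \<Longrightarrow> dd (q - p) f x = 0"
  shows "f p = f q"
proof -
  define \<phi> where "\<phi> t = f (p + t *\<^sub>R (q - p))" for t
  have "DERIV \<phi> t :> 0" if "0 \<le> t" "t \<le> 1" for t
  proof -
    have "p + t *\<^sub>R (q - p) = (1 - t) *\<^sub>R p + t *\<^sub>R q" by (simp add: algebra_simps)
    also have "\<dots> \<in> U" using assms(1,3,4) that unfolding convex_alt by blast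
    finally show ?thesis
      using has_real_derivative_along_line_dd[of f p t "q - p"] assms(2,5) unfolding \<phi>_def by simp
  qed
  then obtain t where "\<phi> 1 - \<phi> 0 = (1 - 0) * 0" using MVT2[of 0 1 \<phi> "\<lambda>_. 0"] by force
  then show ?thesis unfolding \<phi>_def by simp
qed

lemma mixed_difference_mvt:
  fixes f :: "'a::real_normed_vector \<Rightarrow> real"
  assumes S: "\<And>x y. 0 \<le> x \<Longrightarrow> x \<le> s \<Longrightarrow> 0 \<le> y \<Longrightarrow> y \<le> s \<Longrightarrow> p + x *\<^sub>R e + y *\<^sub>R d \<in> U"
    and df: "\<And>q. q \<in> U \<Longrightarrow> f differentiable (at q)"
    and de: "\<And>q. q \<in> U \<Longrightarrow> dd e f differentiable (at q)" and s: "0 < s"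
  obtains x y where "0 < x" "x < s" "0 < y" "y < s"
    "f (p + s *\<^sub>R e + s *\<^sub>R d) - f (p + s *\<^sub>R e) - f (p + s *\<^sub>R d) + f p
       = s * (s * dd d (dd e f) (p + x *\<^sub>R e + y *\<^sub>R d))"
proof -
  define g where "g x = f (p + s *\<^sub>R d + x *\<^sub>R e) - f (p + x *\<^sub>R e)" for x
  define g' where "g' x = dd e f (p + s *\<^sub>R d + x *\<^sub>R e) - dd e f (p + x *\<^sub>R e)" for x
  have g': "DERIV g x :> g' x" if "0 \<le> x" "x \<le> s" for x
  proof -
    have "p + s *\<^sub>R d + x *\<^sub>R e \<in> U" using S[of x s] that s by (simp add: ac_simps)
    moreover have "p + x *\<^sub>R e \<in> U" using S[of x 0] that s by simp
    ultimately show ?thesis unfolding g_def g'_def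
      by (intro DERIV_diff has_real_derivative_along_line_dd df)
  qed
  obtain \<xi> where \<xi>: "0 < \<xi>" "\<xi> < s" "g s - g 0 = (s - 0) * g' \<xi>"
    using MVT2[OF s g'] by blast
  define k where "k y = dd e f (p + \<xi> *\<^sub>R e + y *\<^sub>R d)" for y
  have k': "DERIV k y :> dd d (dd e f) (p + \<xi> *\<^sub>R e + y *\<^sub>R d)" if "0 \<le> y" "y \<le> s" for y
    unfolding k_def using S[of \<xi> y] that \<xi> by (intro has_real_derivative_along_line_dd de) simp
  obtain \<eta> where \<eta>: "0 < \<eta>" "\<eta> < s"
    "k s - k 0 = (s - 0) * dd d (dd e f) (p + \<xi> *\<^sub>R e + \<eta> *\<^sub>R d)"
    using MVT2[OF s k'] by blast
  have "f (p + s *\<^sub>R e + s *\<^sub>R d) - f (p + s *\<^sub>R e) - f (p + s *\<^sub>R d) + f p = g s - g 0"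
    unfolding g_def by (simp add: ac_simps)
  also have "\<dots> = s * (k s - k 0)"
    using \<xi>(3) unfolding k_def g'_def by (simp add: ac_simps)
  also have "\<dots> = s * (s * dd d (dd e f) (p + \<xi> *\<^sub>R e + \<eta> *\<^sub>R d))"
    using \<eta>(3) by simp
  finally show ?thesis by (rule that[OF \<xi>(1,2) \<eta>(1,2)])
qed

lemma mixed_difference_quotient_tendsto:
  fixes f :: "'a::real_normed_vector \<Rightarrow> real"
  assumes U: "open U" and p: "p \<in> U"
    and df: "\<And>q. q \<in> U \<Longrightarrow> f differentiable (at q)"
    and de: "\<And>q. q \<in> U \<Longrightarrow> dd e f differentiable (at q)"
    and cont: "isCont (dd d (dd e f)) p"
  shows "((\<lambda>s. (f (p + s *\<^sub>R e + s *\<^sub>R d) - f (p + s *\<^sub>R e) - f (p + s *\<^sub>R d) + f p) / s\<^sup>2)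
           \<longlongrightarrow> dd d (dd e f) p) (at_right 0)"
proof (rule tendstoI)
  fix \<epsilon> :: real assume "\<epsilon> > 0"
  then obtain \<delta> where \<delta>: "\<delta> > 0"
    "\<And>q. dist q p < \<delta> \<Longrightarrow> dist (dd d (dd e f) q) (dd d (dd e f) p) < \<epsilon>"
    using cont unfolding continuous_at_eps_delta by blast
  obtain r where r: "r > 0" "ball p r \<subseteq> U" using U p open_contains_ball by blast
  define n where "n = norm e + norm d + 1"
  have n: "n > 0" unfolding n_def by (simp add: add_nonneg_pos)
  have "\<forall>\<^sub>F s in at_right 0. 0 < s \<and> s * n < min r \<delta>"
    unfolding eventually_at_right_field using r \<delta> n
    by (intro exI[of _ "min r \<delta> / n"]) (simp add: pos_less_divide_eq)
  then show "\<forall>\<^sub>F s in at_right 0. dist ((f (p + s *\<^sub>R e + s *\<^sub>R d) - f (p + s *\<^sub>R e)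
       - f (p + s *\<^sub>R d) + f p) / s\<^sup>2) (dd d (dd e f) p) < \<epsilon>"
  proof eventually_elim
    case (elim s)
    have near: "dist (p + x *\<^sub>R e + y *\<^sub>R d) p < min r \<delta>"
      if "0 \<le> x" "x \<le> s" "0 \<le> y" "y \<le> s" for x y
    proof -
      have "dist (p + x *\<^sub>R e + y *\<^sub>R d) p \<le> x * norm e + y * norm d"
        using norm_triangle_ineq[of "x *\<^sub>R e" "y *\<^sub>R d"] that by (simp add: dist_norm)
      also have "\<dots> \<le> s * n"
        using mult_right_mono[of x s "norm e"] mult_right_mono[of y s "norm d"] that
        unfolding n_def by (simp add: algebra_simps)
      finally show ?thesis using elim by linarith
    qed
    have "p + x *\<^sub>R e + y *\<^sub>R d \<in> U" if "0 \<le> x" "x \<le> s" "0 \<le> y" "y \<le> s" for x y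
      using near[OF that] r(2) by (auto simp: dist_commute)
    then obtain x y where xy: "0 < x" "x < s" "0 < y" "y < s"
      "f (p + s *\<^sub>R e + s *\<^sub>R d) - f (p + s *\<^sub>R e) - f (p + s *\<^sub>R d) + f p
         = s * (s * dd d (dd e f) (p + x *\<^sub>R e + y *\<^sub>R d))"
      by (rule mixed_difference_mvt[OF _ df de]) (use elim in auto)
    have "dist (p + x *\<^sub>R e + y *\<^sub>R d) p < \<delta>"
      using near[of x y] xy by simp
    moreover have "(f (p + s *\<^sub>R e + s *\<^sub>R d) - f (p + s *\<^sub>R e) - f (p + s *\<^sub>R d) + f p) / s\<^sup>2
        = dd d (dd e f) (p + x *\<^sub>R e + y *\<^sub>R d)"
      unfolding xy(5) using elim by (simp add: power2_eq_square)
    ultimately show ?case using \<delta>(2) by simp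
  qed
qed

(* Clairaut: both mixed derivatives are limits of the same symmetric second difference quotient. *)
lemma dd_dd_commute:
  fixes f :: "'a::real_normed_vector \<Rightarrow> real"
  assumes "open U" "p \<in> U" "\<And>q. q \<in> U \<Longrightarrow> f differentiable (at q)"
    and "\<And>q. q \<in> U \<Longrightarrow> dd e f differentiable (at q)"
    and "\<And>q. q \<in> U \<Longrightarrow> dd d f differentiable (at q)"
    and "isCont (dd d (dd e f)) p" "isCont (dd e (dd d f)) p"
  shows "dd d (dd e f) p = dd e (dd d f) p"
proof (rule tendsto_unique)
  show "at_right (0::real) \<noteq> bot" by simp
  show "((\<lambda>s. (f (p + s *\<^sub>R e + s *\<^sub>R d) - f (p + s *\<^sub>R e) - f (p + s *\<^sub>R d) + f p) / s\<^sup>2)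
           \<longlongrightarrow> dd d (dd e f) p) (at_right 0)"
    using assms by (intro mixed_difference_quotient_tendsto)
  have "(\<lambda>s. (f (p + s *\<^sub>R d + s *\<^sub>R e) - f (p + s *\<^sub>R d) - f (p + s *\<^sub>R e) + f p) / s\<^sup>2)
      = (\<lambda>s. (f (p + s *\<^sub>R e + s *\<^sub>R d) - f (p + s *\<^sub>R e) - f (p + s *\<^sub>R d) + f p) / s\<^sup>2)"
    by (simp add: algebra_simps)
  then show "((\<lambda>s. (f (p + s *\<^sub>R e + s *\<^sub>R d) - f (p + s *\<^sub>R e) - f (p + s *\<^sub>R d) + f p) / s\<^sup>2)
           \<longlongrightarrow> dd e (dd d f) p) (at_right 0)"
    using mixed_difference_quotient_tendsto[of U p f d e] assms by simp
qed

section \<open>Coordinate derivatives and smooth functions\<close>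

lemma pd_add: "f differentiable (at p) \<Longrightarrow> g differentiable (at p) \<Longrightarrow>
    pd i (\<lambda>q. f q + g q) p = pd i f p + pd i g p"
  unfolding pd_def by (rule dd_add)

lemma pd_diff: "f differentiable (at p) \<Longrightarrow> g differentiable (at p) \<Longrightarrow>
    pd i (\<lambda>q. f q - g q) p = pd i f p - pd i g p"
  unfolding pd_def by (rule dd_diff)

lemma pd_mult: "f differentiable (at p) \<Longrightarrow> g differentiable (at p) \<Longrightarrow>
    pd i (\<lambda>q. f q * g q) p = pd i f p * g p + f p * pd i g p"
  unfolding pd_def by (rule dd_mult)

lemma pd_cmult: "f differentiable (at p) \<Longrightarrow> pd i (\<lambda>q. c * f q) p = c * pd i f p"
  unfolding pd_def by (rule dd_cmult)

lemma pd_cdiv: "f differentiable (at p) \<Longrightarrow> pd i (\<lambda>q. f q / c) p = pd i f p / c"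
  using pd_cmult[of f p i "1/c"] by simp

lemma pd_minus: "f differentiable (at p) \<Longrightarrow> pd i (\<lambda>q. - f q) p = - pd i f p"
  using pd_cmult[of f p i "-1"] by simp

lemma pd_const: "pd i (\<lambda>q. c) p = 0"
  unfolding pd_def by (rule dd_const)

lemma pd_linear: "linear f \<Longrightarrow> pd i f p = f (ecoord i)"
  using dd_eq_frechet[of f f p "ecoord i"] unfolding pd_def
  by (simp add: linear_imp_has_derivative)

lemma dd_expand_pt:
  assumes "f differentiable (at p)"
  shows "dd (a, b, c, e) f p = a * pd 0 f p + b * pd 1 f p + c * pd 2 f p + e * pd 3 f p"
proof -
  obtain f' where d: "(f has_derivative f') (at p)"
    using assms unfolding differentiable_def by blast
  have "(a, b, c, e) = a *\<^sub>R ecoord 0 + b *\<^sub>R ecoord 1 + c *\<^sub>R ecoord 2 + e *\<^sub>R ecoord 3"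
    by (simp add: ecoord_def)
  then have "f' (a, b, c, e) = a * f' (ecoord 0) + b * f' (ecoord 1) + c * f' (ecoord 2) + e * f' (ecoord 3)"
    using has_derivative_linear[OF d] by (simp add: linear_add linear_cmul)
  then show ?thesis unfolding pd_def dd_eq_frechet[OF d] .
qed

lemma pd_cong_open: "open S \<Longrightarrow> q \<in> S \<Longrightarrow> (\<And>x. x \<in> S \<Longrightarrow> f x = g x) \<Longrightarrow> pd i f q = pd i g q"
  unfolding pd_def by (rule dd_cong_open)

lemma pd_eq_0_open: "open S \<Longrightarrow> q \<in> S \<Longrightarrow> (\<And>x. x \<in> S \<Longrightarrow> f x = 0) \<Longrightarrow> pd i f q = 0"
  using pd_cong_open[of S q f "\<lambda>_. 0"] by (simp add: pd_const)

lemma ecoord_in_Basis: "ecoord i \<in> Basis"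
  by (auto simp: ecoord_def Basis_prod_def zero_prod_def)

lemma smooth_on_pd:
  assumes "smooth_on U f"
  shows "smooth_on U (pd i f)"
  unfolding smooth_on_def
proof (intro allI impI)
  fix bs :: "pt list" assume "set bs \<subseteq> Basis"
  then have "set (bs @ [ecoord i]) \<subseteq> Basis" using ecoord_in_Basis by simp
  then have "foldr dd (bs @ [ecoord i]) f differentiable_on U"
    using assms unfolding smooth_on_def by blast
  then show "foldr dd bs (pd i f) differentiable_on U" by (simp add: pd_def)
qed

lemma smooth_on_imp_differentiable:
  assumes "smooth_on U f" "open U" "p \<in> U"
  shows "f differentiable (at p)"
proof -
  have "foldr dd [] f differentiable_on U"
    using assms(1) unfolding smooth_on_def by (metis empty_set empty_subsetI)
  then show ?thesis using assms(2,3) by (simp add: differentiable_on_eq_differentiable_at)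
qed

lemma pd_commute:
  assumes "open U" "smooth_on U f" "p \<in> U"
  shows "pd i (pd j f) p = pd j (pd i f) p"
proof -
  have diff: "g differentiable (at q)" if "smooth_on U g" "q \<in> U" for g q
    using smooth_on_imp_differentiable that assms(1) by blast
  have "isCont (pd i (pd j f)) p" "isCont (pd j (pd i f)) p"
    using diff[OF _ assms(3)] assms(2) smooth_on_pd differentiable_imp_continuous_within by blast+
  then show ?thesis unfolding pd_def
    by (intro dd_dd_commute[OF assms(1,3)]) (use diff assms(2) smooth_on_pd in \<open>auto simp: pd_def\<close>)
qed

lemma differentiable_transform_open:
  assumes "f differentiable (at x)" "open N" "x \<in> N" "\<And>y. y \<in> N \<Longrightarrow> f y = g y"
  shows "g differentiable (at x within S)"
proof -
  obtain f' where "(f has_derivative f') (at x)" using assms(1) unfolding differentiable_def by blast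
  then have "(g has_derivative f') (at x)"
    by (rule has_derivative_transform_within_open[of f f' x UNIV N g]) (use assms in auto)
  then show ?thesis unfolding differentiable_def using has_derivative_at_withinI by blast
qed

lemma smooth_on_add_scaled:
  fixes f g :: "'a::euclidean_space \<Rightarrow> real"
  assumes U: "open U" and f: "smooth_on U f" and g: "smooth_on U g"
  shows "smooth_on U (\<lambda>p. f p + c * g p)"
proof -
  have diff: "foldr dd bs f differentiable (at q)" "foldr dd bs g differentiable (at q)"
    if "set bs \<subseteq> Basis" "q \<in> U" for bs :: "'a list" and q
    using f g that U unfolding smooth_on_def by (auto simp: differentiable_on_eq_differentiable_at)
  have eq: "foldr dd bs (\<lambda>p. f p + c * g p) q = foldr dd bs f q + c * foldr dd bs g q"
    if "set bs \<subseteq> Basis" "q \<in> U" for bs :: "'a list" and q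
    using that
  proof (induction bs arbitrary: q)
    case (Cons b bs)
    then have "foldr dd (b # bs) (\<lambda>p. f p + c * g p) q
        = dd b (\<lambda>q. foldr dd bs f q + c * foldr dd bs g q) q"
      using dd_cong_open[OF U, of q "foldr dd bs (\<lambda>p. f p + c * g p)"] by simp
    also have "\<dots> = dd b (foldr dd bs f) q + c * dd b (foldr dd bs g) q"
      using diff Cons.prems by (simp add: dd_add dd_cmult)
    finally show ?case by simp
  qed simp
  show ?thesis unfolding smooth_on_def differentiable_on_def
  proof (intro allI impI ballI)
    fix bs :: "'a list" and q assume bs: "set bs \<subseteq> Basis" and q: "q \<in> U"
    have "(\<lambda>q. foldr dd bs f q + c * foldr dd bs g q) differentiable (at q)"
      using diff[OF bs q] by simp
    then show "foldr dd bs (\<lambda>p. f p + c * g p) differentiable (at q within U)"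
      by (rule differentiable_transform_open[OF _ U q]) (simp add: eq[OF bs])
  qed
qed

lemma smooth_on_local_pullback:
  fixes \<psi> :: "'a::euclidean_space \<Rightarrow> real" and U :: "'b::euclidean_space set" and L :: "'a \<Rightarrow> 'b"
  assumes U: "open U" and L: "linear L" "L ` Basis \<subseteq> Basis"
    and loc: "\<And>z0. z0 \<in> S \<Longrightarrow> \<exists>c \<phi> N. smooth_on U \<phi> \<and> open N \<and> z0 \<in> N
               \<and> (\<forall>z\<in>N. c + L z \<in> U \<and> \<psi> z = \<phi> (c + L z))"
  shows "smooth_on S \<psi>"
  unfolding smooth_on_def differentiable_on_def
proof (intro allI impI ballI)
  fix bs :: "'a list" and z0 assume bs: "set bs \<subseteq> Basis" and "z0 \<in> S"
  then obtain c \<phi> N where \<phi>: "smooth_on U \<phi>" and N: "open N" "z0 \<in> N"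
    and eq: "\<And>z. z \<in> N \<Longrightarrow> c + L z \<in> U \<and> \<psi> z = \<phi> (c + L z)"
    using loc by metis
  have "foldr dd bs \<psi> z = foldr dd bs (\<lambda>z. \<phi> (c + L z)) z" if "z \<in> N" for z
    by (rule foldr_dd_cong_open[OF N(1) _ that]) (use eq in auto)
  then have foldr_eq: "foldr dd bs \<psi> z = foldr dd (map L bs) \<phi> (c + L z)" if "z \<in> N" for z
    using that by (simp add: foldr_dd_affine[OF L(1)])
  have "set (map L bs) \<subseteq> Basis" using bs L(2) by auto
  then have "foldr dd (map L bs) \<phi> differentiable (at (c + L z0))"
    using \<phi> eq[OF N(2)] U unfolding smooth_on_def by (auto simp: differentiable_on_eq_differentiable_at)
  moreover have "(\<lambda>z. c + L z) differentiable (at z0)"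
    using L(1) by (intro differentiable_add differentiable_const linear_imp_differentiable)
  ultimately have "(\<lambda>z. foldr dd (map L bs) \<phi> (c + L z)) differentiable (at z0)"
    by (rule differentiable_compose)
  then show "foldr dd bs \<psi> differentiable (at z0 within S)"
    by (rule differentiable_transform_open[OF _ N]) (simp add: foldr_eq)
qed

lemma smooth_on_factor:
  fixes U :: "'b::euclidean_space set" and \<pi> :: "'b \<Rightarrow> 'a::euclidean_space" and L :: "'a \<Rightarrow> 'b"
  assumes U: "open U" and \<pi>: "linear \<pi>" and L: "linear L" "L ` Basis \<subseteq> Basis"
    and \<pi>L: "\<And>z. \<pi> (L z) = z"
    and fibre: "\<And>p q. p \<in> U \<Longrightarrow> q \<in> U \<Longrightarrow> \<pi> p = \<pi> q \<Longrightarrow> f p = f q"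
    and line: "\<And>p. p \<in> U \<Longrightarrow> \<exists>\<phi>. smooth_on U \<phi> \<and> (\<forall>z. p + L z \<in> U \<longrightarrow> f (p + L z) = \<phi> (p + L z))"
  shows "\<exists>g. smooth_on (\<pi> ` U) g \<and> (\<forall>p\<in>U. f p = g (\<pi> p))"
proof -
  define g where "g w = f (SOME p. p \<in> U \<and> \<pi> p = w)" for w
  have f_eq_g: "f p = g (\<pi> p)" if "p \<in> U" for p
  proof -
    have "(SOME q. q \<in> U \<and> \<pi> q = \<pi> p) \<in> U \<and> \<pi> (SOME q. q \<in> U \<and> \<pi> q = \<pi> p) = \<pi> p"
      by (rule someI) (use that in blast)
    then show ?thesis unfolding g_def using fibre[OF that] by simp
  qed
  have "smooth_on (\<pi> ` U) g"
  proof (rule smooth_on_local_pullback[OF U L])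
    fix w0 assume "w0 \<in> \<pi> ` U"
    then obtain p0 where p0: "p0 \<in> U" "\<pi> p0 = w0" by blast
    obtain \<phi> where \<phi>: "smooth_on U \<phi>" "\<And>z. p0 + L z \<in> U \<Longrightarrow> f (p0 + L z) = \<phi> (p0 + L z)"
      using line[OF p0(1)] by blast
    define c where "c = p0 - L w0"
    define N where "N = (\<lambda>w. c + L w) -` U"
    have "continuous (at w) (\<lambda>w. c + L w)" for w
      using L(1) by (intro continuous_intros linear_continuous_at) (simp add: linear_conv_bounded_linear)
    then have "open N" unfolding N_def using U by (intro continuous_open_vimage)
    moreover have "w0 \<in> N" using p0 unfolding N_def c_def by simp
    moreover have "g w = \<phi> (c + L w)" if "c + L w \<in> U" for w
    proof -
      have cL: "c + L w = p0 + L (w - w0)"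
        unfolding c_def by (simp add: linear_diff[OF L(1)])
      have "\<pi> (c + L w) = w"
        using p0(2) \<pi>L unfolding c_def by (simp add: linear_add[OF \<pi>] linear_diff[OF \<pi>])
      then have "g w = f (c + L w)" using f_eq_g[OF that] by simp
      also have "\<dots> = \<phi> (c + L w)" using \<phi>(2)[of "w - w0"] that unfolding cL by simp
      finally show ?thesis .
    qed
    ultimately show "\<exists>c \<phi> N. smooth_on U \<phi> \<and> open N \<and> w0 \<in> N \<and> (\<forall>w\<in>N. c + L w \<in> U \<and> g w = \<phi> (c + L w))"
      using \<phi>(1) unfolding N_def by blast
  qed
  with f_eq_g show ?thesis by blast
qed

section \<open>Curvature of the pr-wave chart\<close>

lemma lessThan_4: "{..<4::nat} = {0,1,2,3}" by auto

lemma gpr_cases: "gpr F i j p = (if (i = 0 \<and> j = 1) \<or> (i = 1 \<and> j = 0) then 1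
   else if i = 1 \<and> j = 1 then F p else if i = j \<and> (i = 2 \<or> i = 3) then 1 else 0)"
  unfolding gpr_def by (auto simp: doubleton_eq_iff)

lemma gpr_inv_cases: "gpr_inv F i j p = (if (i = 0 \<and> j = 1) \<or> (i = 1 \<and> j = 0) then 1
   else if i = 0 \<and> j = 0 then - F p else if i = j \<and> (i = 2 \<or> i = 3) then 1 else 0)"
  unfolding gpr_inv_def by (auto simp: doubleton_eq_iff)

lemma pd_gpr: "pd i (gpr F k m) p = (if k = 1 \<and> m = 1 then pd i F p else 0)"
proof (cases "k = 1 \<and> m = 1")
  case True
  then have "gpr F k m = F" by (auto simp: gpr_def fun_eq_iff)
  then show ?thesis using True by simp
next
  case False
  then have "gpr F k m = (\<lambda>q. gpr F k m 0)" by (auto simp: gpr_def fun_eq_iff)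
  then show ?thesis using False by (metis pd_const)
qed

(* The components g^lm d_m F of the gradient of F. *)
definition grad_gpr :: "(pt \<Rightarrow> real) \<Rightarrow> nat \<Rightarrow> pt \<Rightarrow> real" where
  "grad_gpr F l p = (if l = 0 then pd 1 F p - F p * pd 0 F p else if l = 1 then pd 0 F p else pd l F p)"

lemma christ_gpr:
  assumes "l < 4"
  shows "christ (gpr F) (gpr_inv F) l j k p = (1/2) * ((if l = 0 then (if k = 1 then pd j F p else 0)
      + (if j = 1 then pd k F p else 0) else 0) - (if j = 1 \<and> k = 1 then grad_gpr F l p else 0))"
proof -
  have "l = 0 \<or> l = 1 \<or> l = 2 \<or> l = 3" using assms by auto
  then show ?thesis
    unfolding christ_def pd_gpr lessThan_4
    by (elim disjE) (simp_all add: gpr_inv_cases grad_gpr_def)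
qed

context
  fixes F :: "pt \<Rightarrow> real" and p :: pt
  assumes dF: "F differentiable (at p)" and dF': "\<And>m. pd m F differentiable (at p)"
begin

lemma pd_grad_gpr: "pd i (grad_gpr F l) p = (if l = 0 then pd i (pd 1 F) p - (pd i F p * pd 0 F p + F p * pd i (pd 0 F) p)
     else if l = 1 then pd i (pd 0 F) p else pd i (pd l F) p)"
  unfolding grad_gpr_def
  by (cases "l = 0"; cases "l = 1") (simp_all add: pd_diff pd_mult dF dF' differentiable_mult)

lemma pd_christ_gpr:
  assumes "l < 4"
  shows "pd i (christ (gpr F) (gpr_inv F) l j k) p = (1/2) * ((if l = 0 then (if k = 1 then pd i (pd j F) p else 0)
      + (if j = 1 then pd i (pd k F) p else 0) else 0) - (if j = 1 \<and> k = 1 then pd i (grad_gpr F l) p else 0))"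
proof -
  have christ: "christ (gpr F) (gpr_inv F) l j k = (\<lambda>q. (1/2) * ((if l = 0 then (if k = 1 then pd j F q else 0)
      + (if j = 1 then pd k F q else 0) else 0) - (if j = 1 \<and> k = 1 then grad_gpr F l q else 0)))"
    using christ_gpr[OF assms] by blast
  have "grad_gpr F l differentiable (at p)"
    unfolding grad_gpr_def using dF dF'
    by (cases "l = 0"; cases "l = 1") (simp_all add: differentiable_diff differentiable_mult)
  then show ?thesis unfolding christ
    by (cases "l = 0"; cases "j = 1"; cases "k = 1")
       (simp_all add: pd_add pd_diff pd_cmult pd_cdiv pd_minus pd_const dF dF')
qed

lemma ricci_gpr:
  "ricci (gpr F) (gpr_inv F) 0 0 p = 0"
  "ricci (gpr F) (gpr_inv F) 0 1 p = 1/2 * pd 0 (pd 0 F) p"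
  "ricci (gpr F) (gpr_inv F) 1 0 p = 1/2 * pd 0 (pd 0 F) p"
  "ricci (gpr F) (gpr_inv F) 0 2 p = 0"
  "ricci (gpr F) (gpr_inv F) 2 0 p = 0"
  "ricci (gpr F) (gpr_inv F) 0 3 p = 0"
  "ricci (gpr F) (gpr_inv F) 3 0 p = 0"
  "ricci (gpr F) (gpr_inv F) 2 2 p = 0"
  "ricci (gpr F) (gpr_inv F) 2 3 p = 0"
  "ricci (gpr F) (gpr_inv F) 3 2 p = 0"
  "ricci (gpr F) (gpr_inv F) 3 3 p = 0"
  "ricci (gpr F) (gpr_inv F) 2 1 p = 1/2 * pd 0 (pd 2 F) p"
  "ricci (gpr F) (gpr_inv F) 3 1 p = 1/2 * pd 0 (pd 3 F) p"
  unfolding ricci_def riem_def lessThan_4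
  by (simp_all add: christ_gpr pd_christ_gpr pd_grad_gpr grad_gpr_def algebra_simps)

lemma riem_gpr_eq_0:
  assumes "pd 0 (pd 0 F) p = 0" "pd 0 (pd 2 F) p = 0" "pd 0 (pd 3 F) p = 0"
    "pd 2 (pd 2 F) p = 0" "pd 2 (pd 3 F) p = 0" "pd 3 (pd 3 F) p = 0"
    and "\<And>i j. pd i (pd j F) p = pd j (pd i F) p"
    and "l < 4" "i < 4" "j < 4" "k < 4"
  shows "riem (gpr F) (gpr_inv F) l i j k p = 0"
proof -
  have "pd 2 (pd 0 F) p = 0" "pd 3 (pd 0 F) p = 0" "pd 3 (pd 2 F) p = 0"
    "pd (Suc 0) (pd 0 F) p = pd 0 (pd (Suc 0) F) p" "pd 2 (pd (Suc 0) F) p = pd (Suc 0) (pd 2 F) p"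
    "pd 3 (pd (Suc 0) F) p = pd (Suc 0) (pd 3 F) p"
    using assms(2,3,5,7) by metis+
  then have "\<forall>l\<in>{0,1,2,3}. \<forall>i\<in>{0,1,2,3}. \<forall>j\<in>{0,1,2,3}. \<forall>k\<in>{0,1,2,3}.
      riem (gpr F) (gpr_inv F) l i j k p = 0"
    unfolding riem_def lessThan_4
    by (simp add: christ_gpr pd_christ_gpr pd_grad_gpr grad_gpr_def assms(1-6) algebra_simps)
  moreover have "l \<in> {0,1,2,3}" "i \<in> {0,1,2,3}" "j \<in> {0,1,2,3}" "k \<in> {0,1,2,3}"
    using assms(8-11) by auto
  ultimately show ?thesis by blast
qed

(* Once rho_uv = 0, Ric maps d_v into the span of d_u, d_x, d_y, these into the span of d_u,
   and d_u to 0; hence Ric^3 = 0. *)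
lemma nilpotent4_ricop_gpr:
  assumes "pd 0 (pd 0 F) p = 0"
  shows "nilpotent4 (ricop (gpr F) (gpr_inv F) p)"
proof -
  define r where "r = (\<lambda>a b. ricci (gpr F) (gpr_inv F) a b p)"
  have r: "r 0 0 = 0" "r 0 2 = 0" "r 0 3 = 0" "r 2 0 = 0" "r 2 2 = 0" "r 2 3 = 0"
     "r 3 0 = 0" "r 3 2 = 0" "r 3 3 = 0" "r 0 (Suc 0) = 0" "r (Suc 0) 0 = 0"
    using ricci_gpr assms unfolding r_def by (simp_all flip: One_nat_def)
  have ricop: "ricop (gpr F) (gpr_inv F) p = (\<lambda>a b. \<Sum>c<4. gpr_inv F a c p * r c b)"
    unfolding ricop_def r_def by simp
  have all4: "(\<forall>i<(4::nat). P i) \<longleftrightarrow> P 0 \<and> P 1 \<and> P 2 \<and> P 3" for P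
    by (metis lessThan_4 lessThan_iff insert_iff empty_iff)
  show ?thesis unfolding nilpotent4_def ricop
    by (rule exI[of _ "Suc (Suc (Suc 0))"], unfold all4) (simp add: lessThan_4 gpr_inv_cases r algebra_simps)
qed

end

lemma hess_gpr:
  "hess (gpr F) (gpr_inv F) h i j p = pd i (pd j h) p
     - (1/2) * ((if j = 1 then pd i F p else 0) + (if i = 1 then pd j F p else 0)) * pd 0 h p
     + (if i = 1 \<and> j = 1 then (1/2) * (\<Sum>l<4. grad_gpr F l p * pd l h p) else 0)"
  unfolding hess_def lessThan_4 by (simp add: christ_gpr algebra_simps)

lemma lap_gpr:
  "lap (gpr F) (gpr_inv F) h p = - F p * pd 0 (pd 0 h) p + pd 0 (pd 1 h) p + pd 1 (pd 0 h) p
     - pd 0 F p * pd 0 h p + pd 2 (pd 2 h) p + pd 3 (pd 3 h) p"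
  unfolding lap_def lessThan_4 by (simp add: hess_gpr gpr_inv_cases algebra_simps)

lemma weinstein_gpr:
  assumes "F differentiable (at p)" "\<And>m. pd m F differentiable (at p)"
  shows
  "weinstein (gpr F) (gpr_inv F) h 0 0 p = - pd 0 (pd 0 h) p"
  "weinstein (gpr F) (gpr_inv F) h 0 2 p = - pd 0 (pd 2 h) p"
  "weinstein (gpr F) (gpr_inv F) h 2 0 p = - pd 2 (pd 0 h) p"
  "weinstein (gpr F) (gpr_inv F) h 0 3 p = - pd 0 (pd 3 h) p"
  "weinstein (gpr F) (gpr_inv F) h 3 0 p = - pd 3 (pd 0 h) p"
  "weinstein (gpr F) (gpr_inv F) h 2 3 p = - pd 2 (pd 3 h) p"
  "weinstein (gpr F) (gpr_inv F) h 3 2 p = - pd 3 (pd 2 h) p"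
  "weinstein (gpr F) (gpr_inv F) h 2 2 p = - pd 2 (pd 2 h) p + lap (gpr F) (gpr_inv F) h p"
  "weinstein (gpr F) (gpr_inv F) h 3 3 p = - pd 3 (pd 3 h) p + lap (gpr F) (gpr_inv F) h p"
  "weinstein (gpr F) (gpr_inv F) h 0 1 p = h p * pd 0 (pd 0 F) p / 2 - pd 0 (pd 1 h) p
     + pd 0 F p * pd 0 h p / 2 + lap (gpr F) (gpr_inv F) h p"
  "weinstein (gpr F) (gpr_inv F) h 1 0 p = h p * pd 0 (pd 0 F) p / 2 - pd 1 (pd 0 h) p
     + pd 0 F p * pd 0 h p / 2 + lap (gpr F) (gpr_inv F) h p"
  "weinstein (gpr F) (gpr_inv F) h 2 1 p = h p * pd 0 (pd 2 F) p / 2 - pd 2 (pd 1 h) p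
     + pd 2 F p * pd 0 h p / 2"
  "weinstein (gpr F) (gpr_inv F) h 3 1 p = h p * pd 0 (pd 3 F) p / 2 - pd 3 (pd 1 h) p
     + pd 3 F p * pd 0 h p / 2"
  unfolding weinstein_def
  by (simp_all add: ricci_gpr[OF assms, unfolded One_nat_def] hess_gpr gpr_cases algebra_simps)

section \<open>Vacuum solutions\<close>

locale vacuum_pr_wave =
  fixes U :: "pt set" and F h :: "pt \<Rightarrow> real"
  assumes open_U: "open U" and convex_U: "convex U"
    and smooth_F: "smooth_on U F" and smooth_h: "smooth_on U h"
    and h_pos: "\<And>p. p \<in> U \<Longrightarrow> h p > 0"
    and vacuum: "\<And>p i j. p \<in> U \<Longrightarrow> i < 4 \<Longrightarrow> j < 4 \<Longrightarrow> weinstein (gpr F) (gpr_inv F) h i j p = 0"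
    and nonflat: "\<And>W. open W \<Longrightarrow> W \<noteq> {} \<Longrightarrow> W \<subseteq> U \<Longrightarrow>
                    \<exists>p\<in>W. \<exists>l<4. \<exists>i<4. \<exists>j<4. \<exists>k<4. riem (gpr F) (gpr_inv F) l i j k p \<noteq> 0"
begin

lemmas smooth = smooth_F smooth_h smooth_on_pd

lemma smooth_differentiable: "smooth_on U f \<Longrightarrow> q \<in> U \<Longrightarrow> f differentiable (at q)"
  using smooth_on_imp_differentiable open_U by blast

lemma smooth_pd_commute: "smooth_on U f \<Longrightarrow> q \<in> U \<Longrightarrow> pd i (pd j f) q = pd j (pd i f) q"
  using pd_commute open_U by blast

lemmas pd_rules = pd_add pd_diff pd_mult pd_cmult pd_cdiv pd_minus pd_const

lemma vacuum_components:
  assumes q: "q \<in> U"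
  shows h_uu: "pd 0 (pd 0 h) q = 0"
    and h_ux: "pd 0 (pd 2 h) q = 0" and h_xu: "pd 2 (pd 0 h) q = 0"
    and h_uy: "pd 0 (pd 3 h) q = 0" and h_yu: "pd 3 (pd 0 h) q = 0"
    and h_xy: "pd 2 (pd 3 h) q = 0" and h_yx: "pd 3 (pd 2 h) q = 0"
    and h_yy: "pd 3 (pd 3 h) q = pd 2 (pd 2 h) q"
    and eq_uv: "2 * pd 1 (pd 0 h) q - pd 0 F q * pd 0 h q + pd 2 (pd 2 h) q = 0"
    and eq_trace: "h q * pd 0 (pd 0 F) q + 3 * pd 2 (pd 2 h) q = 0"
    and eq_xv: "h q * pd 0 (pd 2 F) q - 2 * pd 2 (pd 1 h) q + pd 2 F q * pd 0 h q = 0"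
    and eq_yv: "h q * pd 0 (pd 3 F) q - 2 * pd 3 (pd 1 h) q + pd 3 F q * pd 0 h q = 0"
proof -
  have G: "weinstein (gpr F) (gpr_inv F) h i j q = 0" if "i < 4" "j < 4" for i j
    using vacuum q that by blast
  note Gh = weinstein_gpr[OF smooth_differentiable[OF smooth_F q]
      smooth_differentiable[OF smooth_on_pd[OF smooth_F] q], of h]
  show h_uu: "pd 0 (pd 0 h) q = 0" using G[of 0 0] Gh(1) by simp
  show "pd 0 (pd 2 h) q = 0" "pd 2 (pd 0 h) q = 0" "pd 0 (pd 3 h) q = 0" "pd 3 (pd 0 h) q = 0"
    "pd 2 (pd 3 h) q = 0" "pd 3 (pd 2 h) q = 0"
    using G[of 0 2] G[of 2 0] G[of 0 3] G[of 3 0] G[of 2 3] G[of 3 2] Gh(2-7) by simp_all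
  have lap: "lap (gpr F) (gpr_inv F) h q = pd 2 (pd 2 h) q" using G[of 2 2] Gh(8) by simp
  show h_yy: "pd 3 (pd 3 h) q = pd 2 (pd 2 h) q" using G[of 3 3] Gh(9) lap by simp
  show "h q * pd 0 (pd 2 F) q - 2 * pd 2 (pd 1 h) q + pd 2 F q * pd 0 h q = 0"
    "h q * pd 0 (pd 3 F) q - 2 * pd 3 (pd 1 h) q + pd 3 F q * pd 0 h q = 0"
    using G[of 2 1] G[of 3 1] Gh(12,13) by simp_all
  have "lap (gpr F) (gpr_inv F) h q = pd 0 (pd 1 h) q + pd 1 (pd 0 h) q
      - pd 0 F q * pd 0 h q + 2 * pd 2 (pd 2 h) q"
    using lap_gpr[of F h q] h_uu h_yy by simp
  moreover have "pd 0 (pd 1 h) q = pd 1 (pd 0 h) q" using smooth_pd_commute[OF smooth_h q] .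
  ultimately show uv: "2 * pd 1 (pd 0 h) q - pd 0 F q * pd 0 h q + pd 2 (pd 2 h) q = 0"
    using lap by linarith
  show "h q * pd 0 (pd 0 F) q + 3 * pd 2 (pd 2 h) q = 0"
    using G[of 1 0] Gh(11) lap uv by simp
qed

lemma pd_eq_0_on_U: "(\<And>x. x \<in> U \<Longrightarrow> f x = 0) \<Longrightarrow> q \<in> U \<Longrightarrow> pd i f q = 0"
  using pd_eq_0_open open_U by blast

lemma F_uu_mult_h_u:
  assumes q: "q \<in> U"
  shows "pd 0 (pd 0 F) q * pd 0 h q = 0"
proof -
  have "pd 0 (\<lambda>x. 2 * pd 1 (pd 0 h) x - pd 0 F x * pd 0 h x + pd 2 (pd 2 h) x) q = 0"
    using eq_uv q by (intro pd_eq_0_on_U)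
  then have "2 * pd 0 (pd 1 (pd 0 h)) q - (pd 0 (pd 0 F) q * pd 0 h q + pd 0 F q * pd 0 (pd 0 h) q)
      + pd 0 (pd 2 (pd 2 h)) q = 0"
    by (simp add: pd_rules smooth_differentiable q smooth)
  moreover have "pd 0 (pd 1 (pd 0 h)) q = 0"
    using smooth_pd_commute[of "pd 0 h" q 0 1] pd_eq_0_on_U[OF h_uu q] smooth q by simp
  moreover have "pd 0 (pd 2 (pd 2 h)) q = 0"
    using smooth_pd_commute[of "pd 2 h" q 0 2] pd_eq_0_on_U[OF h_ux q] smooth q by simp
  ultimately show ?thesis using h_uu[OF q] by simp
qed

(* On an open set W where h_u does not vanish, the differentiated field equations kill all
   second derivatives of F in u, x, y, so the metric is flat on W. *)
context
  fixes W assumes W: "open W" "W \<subseteq> U" and h_u_W: "\<And>q. q \<in> W \<Longrightarrow> pd 0 h q \<noteq> 0"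
begin

lemma F_uu_W:
  assumes "q \<in> W"
  shows "pd 0 (pd 0 F) q = 0"
  using F_uu_mult_h_u[of q] h_u_W[OF assms] W(2) assms by auto

lemma h_second_W:
  assumes "q \<in> W" "i \<in> {2,3}" "j \<in> {2,3}"
  shows "pd i (pd j h) q = 0"
proof -
  have qU: "q \<in> U" using assms(1) W(2) by blast
  have "pd 2 (pd 2 h) q = 0" using eq_trace[OF qU] F_uu_W[OF assms(1)] by simp
  then show ?thesis using assms(2,3) h_xy[OF qU] h_yx[OF qU] h_yy[OF qU] by auto
qed

lemma F_u_second_W:
  assumes q: "q \<in> W" and i: "i \<in> {2,3}"
  shows "pd i (pd 0 F) q = 0"
proof -
  have qU: "q \<in> U" using q W(2) by blast
  have h_iu: "pd i (pd 0 h) x = 0" if "x \<in> U" for x using i h_xu[OF that] h_yu[OF that] by auto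
  have "pd i (\<lambda>x. 2 * pd 1 (pd 0 h) x - pd 0 F x * pd 0 h x + pd 2 (pd 2 h) x) q = 0"
    using eq_uv qU by (intro pd_eq_0_on_U)
  then have "2 * pd i (pd 1 (pd 0 h)) q - (pd i (pd 0 F) q * pd 0 h q + pd 0 F q * pd i (pd 0 h) q)
      + pd i (pd 2 (pd 2 h)) q = 0"
    by (simp add: pd_rules smooth_differentiable qU smooth)
  moreover have "pd i (pd 1 (pd 0 h)) q = 0"
    using smooth_pd_commute[of "pd 0 h" q i 1] pd_eq_0_on_U[OF h_iu qU] smooth qU by simp
  moreover have "pd i (pd 2 (pd 2 h)) q = 0"
    using pd_eq_0_open[OF W(1) q] h_second_W by simp
  ultimately show ?thesis using h_iu[OF qU] h_u_W[OF q] by simp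
qed

lemma F_second_W:
  assumes q: "q \<in> W" and i: "i \<in> {2,3}" and j: "j \<in> {2,3}"
  shows "pd i (pd j F) q = 0"
proof -
  have qU: "q \<in> U" using q W(2) by blast
  have h_iu: "pd i (pd 0 h) x = 0" if "x \<in> U" for x using i h_xu[OF that] h_yu[OF that] by auto
  have "h x * pd 0 (pd j F) x - 2 * pd j (pd 1 h) x + pd j F x * pd 0 h x = 0" if "x \<in> U" for x
    using j eq_xv[OF that] eq_yv[OF that] by auto
  then have "pd i (\<lambda>x. h x * pd 0 (pd j F) x - 2 * pd j (pd 1 h) x + pd j F x * pd 0 h x) q = 0"
    using qU by (intro pd_eq_0_on_U)
  then have "pd i h q * pd 0 (pd j F) q + h q * pd i (pd 0 (pd j F)) q - 2 * pd i (pd j (pd 1 h)) q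
      + (pd i (pd j F) q * pd 0 h q + pd j F q * pd i (pd 0 h) q) = 0"
    by (simp add: pd_rules smooth_differentiable qU smooth)
  moreover have F_uj: "pd 0 (pd j F) x = 0" if "x \<in> W" for x
    using smooth_pd_commute[OF smooth_F, of x 0 j] F_u_second_W[OF that j] W(2) that by auto
  moreover have "pd i (pd 0 (pd j F)) q = 0"
    using pd_eq_0_open[OF W(1) q] F_uj by blast
  moreover have "pd i (pd j (pd 1 h)) q = pd 1 (pd i (pd j h)) q"
    using pd_cong_open[OF open_U qU, of "pd j (pd 1 h)" "pd 1 (pd j h)" i]
      smooth_pd_commute[OF smooth_h] smooth_pd_commute[of "pd j h" q i 1] smooth qU by simp
  moreover have "pd 1 (pd i (pd j h)) q = 0"
    using pd_eq_0_open[OF W(1) q] h_second_W i j by blast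
  ultimately show ?thesis using h_iu[OF qU] h_u_W[OF q] F_uj[OF q] by simp
qed

lemma flat_W:
  assumes "q \<in> W" "l < 4" "i < 4" "j < 4" "k < 4"
  shows "riem (gpr F) (gpr_inv F) l i j k q = 0"
proof -
  have qU: "q \<in> U" using assms(1) W(2) by blast
  have "pd 0 (pd 2 F) q = 0" "pd 0 (pd 3 F) q = 0"
    using smooth_pd_commute[OF smooth_F qU, of 0] F_u_second_W[OF assms(1)] by auto
  moreover have "pd 2 (pd 2 F) q = 0" "pd 2 (pd 3 F) q = 0" "pd 3 (pd 3 F) q = 0"
    using F_second_W[OF assms(1)] by auto
  ultimately show ?thesis
    using riem_gpr_eq_0[OF smooth_differentiable[OF smooth_F qU] smooth_differentiable[OF smooth_on_pd[OF smooth_F] qU]]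
      F_uu_W[OF assms(1)] smooth_pd_commute[OF smooth_F qU] assms(2-5) by blast
qed

end

lemma open_nonzero_pd:
  assumes "smooth_on U f"
  shows "open {x \<in> U. pd i f x \<noteq> 0}"
proof -
  have "isCont (pd i f) x" if "x \<in> U" for x
    using smooth_differentiable[OF smooth_on_pd[OF assms] that] differentiable_imp_continuous_within by blast
  then have "continuous_on U (pd i f)" by (simp add: continuous_at_imp_continuous_on)
  then have "open (U \<inter> pd i f -` (- {0}))"
    using open_U by (rule continuous_open_preimage) (simp add: open_Compl)
  moreover have "{x \<in> U. pd i f x \<noteq> 0} = U \<inter> pd i f -` (- {0})" by auto
  ultimately show ?thesis by simp
qed

lemma h_u_eq_0:
  assumes q: "q \<in> U"
  shows "pd 0 h q = 0"
proof (rule ccontr)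
  assume "pd 0 h q \<noteq> 0"
  define W where "W = {x \<in> U. pd 0 h x \<noteq> 0}"
  have W: "open W" "W \<subseteq> U" "\<And>x. x \<in> W \<Longrightarrow> pd 0 h x \<noteq> 0"
    unfolding W_def using open_nonzero_pd[OF smooth_h] by auto
  moreover have "W \<noteq> {}" using q \<open>pd 0 h q \<noteq> 0\<close> unfolding W_def by blast
  then obtain x l i j k where x: "x \<in> W" "l < 4" "i < 4" "j < 4" "k < 4"
    and "riem (gpr F) (gpr_inv F) l i j k x \<noteq> 0"
    using nonflat[OF W(1) _ W(2)] by blast
  with flat_W[OF W x] show False by simp
qed

lemma F_uux_eq_0:
  assumes q: "q \<in> U"
  shows "pd 0 (pd 0 (pd 2 F)) q = 0"
proof -
  have "pd 0 (\<lambda>x. h x * pd 0 (pd 2 F) x - 2 * pd 2 (pd 1 h) x + pd 2 F x * pd 0 h x) q = 0"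
    using eq_xv q by (intro pd_eq_0_on_U)
  then have "pd 0 h q * pd 0 (pd 2 F) q + h q * pd 0 (pd 0 (pd 2 F)) q - 2 * pd 0 (pd 2 (pd 1 h)) q
      + (pd 0 (pd 2 F) q * pd 0 h q + pd 2 F q * pd 0 (pd 0 h) q) = 0"
    by (simp add: pd_rules smooth_differentiable q smooth)
  moreover have "pd 0 (pd 2 (pd 1 h)) q = 0"
  proof -
    have "pd 1 (pd 0 h) x = 0" if "x \<in> U" for x
      using h_u_eq_0 that by (rule pd_eq_0_on_U)
    then have "pd 2 (pd 1 (pd 0 h)) q = 0"
      using q by (rule pd_eq_0_on_U)
    moreover have "pd 2 (pd 0 (pd 1 h)) q = pd 2 (pd 1 (pd 0 h)) q"
      by (rule pd_cong_open[OF open_U q]) (use smooth_pd_commute[OF smooth_h] in simp)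
    moreover have "pd 0 (pd 2 (pd 1 h)) q = pd 2 (pd 0 (pd 1 h)) q"
      using smooth_pd_commute[of "pd 1 h" q 0 2] smooth q by blast
    ultimately show ?thesis by simp
  qed
  ultimately have "h q * pd 0 (pd 0 (pd 2 F)) q = 0" using h_u_eq_0[OF q] h_uu[OF q] by simp
  then show ?thesis using h_pos[OF q] by simp
qed

lemma h_x_mult_F_uu:
  assumes q: "q \<in> U"
  shows "pd 2 h q * pd 0 (pd 0 F) q = 0"
proof -
  have "pd 2 (\<lambda>x. h x * pd 0 (pd 0 F) x + 3 * pd 2 (pd 2 h) x) q = 0"
    using eq_trace q by (intro pd_eq_0_on_U)
  then have "pd 2 h q * pd 0 (pd 0 F) q + h q * pd 2 (pd 0 (pd 0 F)) q + 3 * pd 2 (pd 2 (pd 2 h)) q = 0"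
    by (simp add: pd_rules smooth_differentiable q smooth)
  moreover have "pd 2 (pd 0 (pd 0 F)) q = pd 0 (pd 0 (pd 2 F)) q"
  proof -
    have "pd 2 (pd 0 (pd 0 F)) q = pd 0 (pd 2 (pd 0 F)) q"
      using smooth_pd_commute[of "pd 0 F" q 2 0] smooth q by blast
    also have "\<dots> = pd 0 (pd 0 (pd 2 F)) q"
      by (rule pd_cong_open[OF open_U q]) (use smooth_pd_commute[OF smooth_F] in simp)
    finally show ?thesis .
  qed
  moreover have "pd 2 (pd 2 (pd 2 h)) q = pd 3 (pd 2 (pd 3 h)) q"
    using pd_cong_open[OF open_U q, of "pd 2 (pd 2 h)" "pd 3 (pd 3 h)" 2] h_yy
      smooth_pd_commute[of "pd 3 h" q 2 3] smooth q by simp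
  moreover have "pd 3 (pd 2 (pd 3 h)) q = 0"
    using pd_eq_0_on_U[OF h_xy q] .
  ultimately show ?thesis using F_uux_eq_0[OF q] by simp
qed

lemma h_xx_eq_0:
  assumes q: "q \<in> U"
  shows "pd 2 (pd 2 h) q = 0"
proof (rule ccontr)
  assume "pd 2 (pd 2 h) q \<noteq> 0"
  define V where "V = {x \<in> U. pd 2 (pd 2 h) x \<noteq> 0}"
  have h_x_V: "pd 2 h x = 0" if "x \<in> V" for x
  proof -
    have x: "x \<in> U" "pd 2 (pd 2 h) x \<noteq> 0" using that unfolding V_def by auto
    then have "pd 0 (pd 0 F) x \<noteq> 0" using eq_trace[OF x(1)] by auto
    then show ?thesis using h_x_mult_F_uu[OF x(1)] by simp
  qed
  have "open V" unfolding V_def by (rule open_nonzero_pd[OF smooth_on_pd[OF smooth_h]])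
  moreover have "q \<in> V" using q \<open>pd 2 (pd 2 h) q \<noteq> 0\<close> unfolding V_def by simp
  ultimately have "pd 2 (pd 2 h) q = 0" using h_x_V by (rule pd_eq_0_open)
  with \<open>pd 2 (pd 2 h) q \<noteq> 0\<close> show False ..
qed

lemma F_uu_eq_0:
  assumes q: "q \<in> U"
  shows "pd 0 (pd 0 F) q = 0"
proof -
  have "h q * pd 0 (pd 0 F) q = 0" using eq_trace[OF q] h_xx_eq_0[OF q] by simp
  then show ?thesis using h_pos[OF q] by simp
qed

lemma nilpotent_Ricci: "p \<in> U \<Longrightarrow> nilpotent4 (ricop (gpr F) (gpr_inv F) p)"
  by (rule nilpotent4_ricop_gpr[OF smooth_differentiable[OF smooth_F] smooth_differentiable[OF smooth_on_pd[OF smooth_F]]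
      F_uu_eq_0])

lemma eq_on_v_fibre:
  assumes diff: "\<And>x. x \<in> U \<Longrightarrow> f differentiable (at x)"
    and zero: "\<And>x i. x \<in> U \<Longrightarrow> i \<in> {0,2,3} \<Longrightarrow> pd i f x = 0"
    and pq: "p \<in> U" "q \<in> U" "fst (snd p) = fst (snd q)"
  shows "f p = f q"
proof (rule eq_if_dd_eq_0_convex[OF convex_U diff pq(1,2)])
  fix x assume x: "x \<in> U"
  obtain a b c e where qp: "q - p = (a, b, c, e)" by (metis prod.collapse)
  moreover have "b = 0" using pq(3) arg_cong[OF qp, of "\<lambda>r. fst (snd r)"] by simp
  ultimately show "dd (q - p) f x = 0"
    using dd_expand_pt[OF diff[OF x]] zero[OF x] by simp
qed

lemma eq_on_u_line:
  assumes diff: "\<And>x. x \<in> U \<Longrightarrow> f differentiable (at x)"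
    and zero: "\<And>x. x \<in> U \<Longrightarrow> pd 0 f x = 0"
    and pq: "p \<in> U" "q \<in> U" "snd p = snd q"
  shows "f p = f q"
proof (rule eq_if_dd_eq_0_convex[OF convex_U diff pq(1,2)])
  fix x assume x: "x \<in> U"
  obtain a b c e where qp: "q - p = (a, b, c, e)" by (metis prod.collapse)
  moreover have "b = 0" "c = 0" "e = 0" using pq(3) arg_cong[OF qp, of snd] by (simp_all add: zero_prod_def)
  ultimately show "dd (q - p) f x = 0"
    using dd_expand_pt[OF diff[OF x]] zero[OF x] by simp
qed

lemma h_affine_in_x_y:
  "\<exists>hx hy h0 :: real \<Rightarrow> real.
     smooth_on ((\<lambda>(u,v,x,y). v) ` U) hx \<and> smooth_on ((\<lambda>(u,v,x,y). v) ` U) hy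
   \<and> smooth_on ((\<lambda>(u,v,x,y). v) ` U) h0
   \<and> (\<forall>u v x y. (u,v,x,y) \<in> U \<longrightarrow> h (u,v,x,y) = hx v * x + hy v * y + h0 v)"
proof -
  define \<pi> :: "pt \<Rightarrow> real" where "\<pi> = (\<lambda>(u,v,x,y). v)"
  define L :: "real \<Rightarrow> pt" where "L z = z *\<^sub>R ecoord 1" for z
  have factor: "\<exists>g. smooth_on (\<pi> ` U) g \<and> (\<forall>p\<in>U. f p = g (\<pi> p))"
    if diff: "\<And>x. x \<in> U \<Longrightarrow> f differentiable (at x)"
      and zero: "\<And>x i. x \<in> U \<Longrightarrow> i \<in> {0,2,3} \<Longrightarrow> pd i f x = 0"
      and line: "\<And>p. p \<in> U \<Longrightarrow>
        \<exists>\<phi>. smooth_on U \<phi> \<and> (\<forall>z. p + L z \<in> U \<longrightarrow> f (p + L z) = \<phi> (p + L z))"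
    for f
  proof (rule smooth_on_factor[OF open_U _ _ _ _ _ line])
    show "linear \<pi>" unfolding \<pi>_def by (simp add: linear_iff split_beta)
    show "linear L" unfolding L_def by (simp add: linear_iff scaleR_add_left)
    show "L ` Basis \<subseteq> Basis" unfolding L_def by (simp add: ecoord_in_Basis)
    show "\<pi> (L z) = z" for z unfolding \<pi>_def L_def by (simp add: ecoord_def)
    show "f p = f q" if "p \<in> U" "q \<in> U" "\<pi> p = \<pi> q" for p q
      using that by (intro eq_on_v_fibre[OF diff zero]) (simp_all add: \<pi>_def split_beta)
  qed
  have x_linear: "linear (\<lambda>q::pt. fst (snd (snd q)))" and y_linear: "linear (\<lambda>q::pt. snd (snd (snd q)))"
    by (simp_all add: linear_iff)
  have factor_smooth: "\<exists>g. smooth_on (\<pi> ` U) g \<and> (\<forall>p\<in>U. f p = g (\<pi> p))"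
    if "smooth_on U f" "\<And>x i. x \<in> U \<Longrightarrow> i \<in> {0,2,3} \<Longrightarrow> pd i f x = 0" for f
    by (rule factor) (use that smooth_differentiable in blast)+
  have "\<exists>g. smooth_on (\<pi> ` U) g \<and> (\<forall>p\<in>U. pd 2 h p = g (\<pi> p))"
    by (rule factor_smooth) (auto simp: smooth h_ux h_xx_eq_0 h_yx)
  then obtain hx where hx: "smooth_on (\<pi> ` U) hx" "\<And>p. p \<in> U \<Longrightarrow> pd 2 h p = hx (\<pi> p)" by blast
  have "\<exists>g. smooth_on (\<pi> ` U) g \<and> (\<forall>p\<in>U. pd 3 h p = g (\<pi> p))"
    by (rule factor_smooth) (auto simp: smooth h_uy h_xy h_yy h_xx_eq_0)
  then obtain hy where hy: "smooth_on (\<pi> ` U) hy" "\<And>p. p \<in> U \<Longrightarrow> pd 3 h p = hy (\<pi> p)" by blast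
  define c where "c q = h q - fst (snd (snd q)) * pd 2 h q - snd (snd (snd q)) * pd 3 h q" for q
  have "\<exists>g. smooth_on (\<pi> ` U) g \<and> (\<forall>p\<in>U. c p = g (\<pi> p))"
  proof (rule factor)
    show "c differentiable (at x)" if "x \<in> U" for x
      unfolding c_def
      using smooth_differentiable smooth that linear_imp_differentiable[OF x_linear]
        linear_imp_differentiable[OF y_linear]
      by (intro differentiable_diff differentiable_mult) auto
    show "pd i c x = 0" if x: "x \<in> U" and i: "i \<in> {0,2,3}" for x i
      using i h_u_eq_0[OF x] h_ux[OF x] h_uy[OF x] h_xy[OF x] h_yx[OF x] h_yy[OF x] h_xx_eq_0[OF x]
      unfolding c_def
      by (auto simp: pd_rules pd_linear x_linear y_linear smooth_differentiable smooth x linear_imp_differentiable ecoord_def)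
    show "\<exists>\<phi>. smooth_on U \<phi> \<and> (\<forall>z. p + L z \<in> U \<longrightarrow> c (p + L z) = \<phi> (p + L z))" if "p \<in> U" for p
    proof (intro exI conjI allI impI)
      show "smooth_on U (\<lambda>q. h q + (- fst (snd (snd p))) * pd 2 h q + (- snd (snd (snd p))) * pd 3 h q)"
        using smooth by (intro smooth_on_add_scaled open_U) auto
      show "c (p + L z) = h (p + L z) + (- fst (snd (snd p))) * pd 2 h (p + L z)
          + (- snd (snd (snd p))) * pd 3 h (p + L z)" for z
        unfolding c_def L_def by (simp add: ecoord_def)
    qed
  qed
  then obtain h0 where h0: "smooth_on (\<pi> ` U) h0" "\<And>p. p \<in> U \<Longrightarrow> c p = h0 (\<pi> p)" by blast
  have "h (u,v,x,y) = hx v * x + hy v * y + h0 v" if "(u,v,x,y) \<in> U" for u v x y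
    using hx(2)[OF that] hy(2)[OF that] h0(2)[OF that] unfolding c_def \<pi>_def by (simp add: algebra_simps)
  then show ?thesis using hx(1) hy(1) h0(1) unfolding \<pi>_def by blast
qed

lemma F_affine_in_u:
  "\<exists>F1 F0 :: real \<times> real \<times> real \<Rightarrow> real.
     smooth_on ((\<lambda>(u,v,x,y). (v,x,y)) ` U) F1 \<and> smooth_on ((\<lambda>(u,v,x,y). (v,x,y)) ` U) F0
   \<and> (\<forall>u v x y. (u,v,x,y) \<in> U \<longrightarrow> F (u,v,x,y) = F1 (v,x,y) * u + F0 (v,x,y))"
proof -
  define \<pi> :: "pt \<Rightarrow> real \<times> real \<times> real" where "\<pi> = (\<lambda>(u,v,x,y). (v,x,y))"
  define L :: "real \<times> real \<times> real \<Rightarrow> pt" where "L w = (0, w)" for w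
  have factor: "\<exists>g. smooth_on (\<pi> ` U) g \<and> (\<forall>p\<in>U. f p = g (\<pi> p))"
    if diff: "\<And>x. x \<in> U \<Longrightarrow> f differentiable (at x)"
      and zero: "\<And>x. x \<in> U \<Longrightarrow> pd 0 f x = 0"
      and line: "\<And>p. p \<in> U \<Longrightarrow>
        \<exists>\<phi>. smooth_on U \<phi> \<and> (\<forall>z. p + L z \<in> U \<longrightarrow> f (p + L z) = \<phi> (p + L z))"
    for f
  proof (rule smooth_on_factor[OF open_U _ _ _ _ _ line])
    show "linear \<pi>" unfolding \<pi>_def by (simp add: linear_iff split_beta)
    show "linear L" unfolding L_def by (simp add: linear_iff)
    show "L ` Basis \<subseteq> Basis" unfolding L_def by (auto simp: Basis_prod_def)
    show "\<pi> (L z) = z" for z unfolding \<pi>_def L_def by (simp add: split_beta)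
    show "f p = f q" if "p \<in> U" "q \<in> U" "\<pi> p = \<pi> q" for p q
      using that by (intro eq_on_u_line[OF diff zero]) (simp_all add: \<pi>_def split_beta prod_eq_iff)
  qed
  have "\<exists>g. smooth_on (\<pi> ` U) g \<and> (\<forall>p\<in>U. pd 0 F p = g (\<pi> p))"
    by (rule factor) (use smooth_differentiable smooth F_uu_eq_0 in blast)+
  then obtain F1 where F1: "smooth_on (\<pi> ` U) F1" "\<And>p. p \<in> U \<Longrightarrow> pd 0 F p = F1 (\<pi> p)" by blast
  have u_linear: "linear (\<lambda>q::pt. fst q)" by (simp add: linear_iff)
  define c where "c q = F q - fst q * pd 0 F q" for q
  have "\<exists>g. smooth_on (\<pi> ` U) g \<and> (\<forall>p\<in>U. c p = g (\<pi> p))"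
  proof (rule factor)
    show "c differentiable (at x)" if "x \<in> U" for x
      unfolding c_def using smooth_differentiable smooth that linear_imp_differentiable[OF u_linear]
      by (intro differentiable_diff differentiable_mult) auto
    show "pd 0 c x = 0" if "x \<in> U" for x
      using that F_uu_eq_0 unfolding c_def
      by (simp add: pd_rules pd_linear u_linear smooth_differentiable smooth linear_imp_differentiable ecoord_def)
    show "\<exists>\<phi>. smooth_on U \<phi> \<and> (\<forall>z. p + L z \<in> U \<longrightarrow> c (p + L z) = \<phi> (p + L z))" if "p \<in> U" for p
    proof (intro exI conjI allI impI)
      show "smooth_on U (\<lambda>q. F q + (- fst p) * pd 0 F q)"
        using smooth by (intro smooth_on_add_scaled open_U) auto
      show "c (p + L z) = F (p + L z) + (- fst p) * pd 0 F (p + L z)" for z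
        unfolding c_def L_def by simp
    qed
  qed
  then obtain F0 where F0: "smooth_on (\<pi> ` U) F0" "\<And>p. p \<in> U \<Longrightarrow> c p = F0 (\<pi> p)" by blast
  have "F (u,v,x,y) = F1 (v,x,y) * u + F0 (v,x,y)" if "(u,v,x,y) \<in> U" for u v x y
    using F1(2)[OF that] F0(2)[OF that] unfolding c_def \<pi>_def by (simp add: algebra_simps)
  then show ?thesis using F1(1) F0(1) unfolding \<pi>_def by blast
qed

end

theorem lemma3p2:
  fixes U :: "pt set" and F h :: "pt \<Rightarrow> real"
  assumes U_open: "open U" and U_convex: "convex U" and U_ne: "U \<noteq> {}"
    and F_smooth: "smooth_on U F"
    and h_smooth: "smooth_on U h"
    and h_pos: "\<forall>p\<in>U. h p > 0"
    and h_nonconst: "\<forall>W. open W \<and> W \<noteq> {} \<and> W \<subseteq> U \<longrightarrow> \<not> (\<exists>c. \<forall>p\<in>W. h p = c)"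
    and vacuum: "\<forall>p\<in>U. \<forall>i<4. \<forall>j<4. weinstein (gpr F) (gpr_inv F) h i j p = 0"
    and nonflat: "\<forall>W. open W \<and> W \<noteq> {} \<and> W \<subseteq> U \<longrightarrow>
                    (\<exists>p\<in>W. \<exists>l<4. \<exists>i<4. \<exists>j<4. \<exists>k<4. riem (gpr F) (gpr_inv F) l i j k p \<noteq> 0)"
  shows "(\<forall>p\<in>U. nilpotent4 (ricop (gpr F) (gpr_inv F) p))
       \<and> (\<exists>hx hy h0 :: real \<Rightarrow> real.
            smooth_on ((\<lambda>(u,v,x,y). v) ` U) hx \<and> smooth_on ((\<lambda>(u,v,x,y). v) ` U) hy
          \<and> smooth_on ((\<lambda>(u,v,x,y). v) ` U) h0
          \<and> (\<forall>u v x y. (u,v,x,y) \<in> U \<longrightarrow> h (u,v,x,y) = hx v * x + hy v * y + h0 v))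
       \<and> (\<exists>F1 F0 :: real \<times> real \<times> real \<Rightarrow> real.
            smooth_on ((\<lambda>(u,v,x,y). (v,x,y)) ` U) F1 \<and> smooth_on ((\<lambda>(u,v,x,y). (v,x,y)) ` U) F0
          \<and> (\<forall>u v x y. (u,v,x,y) \<in> U \<longrightarrow> F (u,v,x,y) = F1 (v,x,y) * u + F0 (v,x,y)))"
proof -
  interpret vacuum_pr_wave U F h
    by unfold_locales (use U_open U_convex F_smooth h_smooth h_pos vacuum nonflat in auto)
  show ?thesis using nilpotent_Ricci h_affine_in_x_y F_affine_in_u by blast
qed

end
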